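(* Let $\mathcal{M}\subseteq\binom{[n]}{k}$ be a positroid with Grassmann necklace $(I_1,\dots,I_n)$ and decorated permutation $\pi^{:}=(\pi,col)$, and let $j\in[n]$ with $\pi(j)\neq j$. Put $\mathcal{M}':=\{H\in\mathcal{M} : j\in H\}$. Then for every $a\in[n]$ with $j\notin I_a$, the set $I_a\setminus I_j$ is nonempty and $$\bigl(I_a\setminus\{\max_a(I_a\setminus I_j)\}\bigr)\cup\{j\}\in\mathcal{M}'.$$
   Context: Indices are taken modulo $n$; we identify $[n]$ with $\mathbb{Z}_n$. For $t\in[n]$, the total order $\le_t$ on $[n]$ is $t<_t t+1<_t\cdots<_t n<_t 1<_t\cdots<_t t-1$. For $A,B\in\binom{[n]}{k}$ with $A=\{i_1<_t\cdots<_t i_k\}$ and $B=\{j_1<_t\cdots<_t j_k\}$, write $A\le_t B$ (Gale order) iff $i_s\le_t j_s$ for all $s$. For $D\subseteq[n]$, $\max_a(D)$ is the largest element of $D$ in $\le_a$. A Grassmann necklace is a sequence $(I_1,\dots,I_n)$ of subsets of $[n]$ such that for each $i$: if $i\in I_i$ then $I_{i+1}=(I_i\setminus\{i\})\cup\{j'\}$ for some $j'\in[n]$, and if $i\notin I_i$ then $I_{i+1}=I_i$. A positroid is a set $\mathcal{M}\subseteq\binom{[n]}{k}$ for which there is a Grassmann necklace $(I_1,\dots,I_n)$ with $\mathcal{M}=\{H : H\ge_t I_t \text{ for all } t\in[n]\}$; then $I_t$ is the $\le_t$-minimum of $\mathcal{M}$ and $(I_1,\dots,I_n)$ is called the Grassmann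 necklace of $\mathcal{M}$. A decorated permutation is a pair $(\pi,col)$ with $\pi\in S_n$ and $col$ a function from the fixed points of $\pi$ to $\{1,-1\}$. The necklace and decorated permutation correspond bijectively via: if $I_{i+1}=(I_i\setminus\{i\})\cup\{j'\}$ with $j'\ne i$ then $\pi(i)=j'$; if $I_{i+1}=I_i$ and $i\notin I_i$ then $\pi(i)=i$, $col(i)=1$; if $I_{i+1}=I_i$ and $i\in I_i$ then $\pi(i)=i$, $col(i)=-1$. Conversely $I_r=\{i\in[n] : i<_r\pi^{-1}(i)\text{ or }(\pi(i)=i\text{ and }col(i)=-1)\}$. *)

theory Defs
  imports Main
begin

text \<open>Ground set [n] = {1..n}, identified with Z_n; the cyclic successor of i is
  (i mod n) + 1, so the successor of n is 1.\<close>

definition cyc_succ :: "nat \<Rightarrow> nat \<Rightarrow> nat" where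
  "cyc_succ n i = (i mod n) + 1"

text \<open>Position of i (in [n]) in the total order <=_t :
  t <_t t+1 <_t ... <_t n <_t 1 <_t ... <_t t-1 (t has position 0).\<close>
definition crank :: "nat \<Rightarrow> nat \<Rightarrow> nat \<Rightarrow> nat" where
  "crank n t i = (i + n - t) mod n"

definition cle :: "nat \<Rightarrow> nat \<Rightarrow> nat \<Rightarrow> nat \<Rightarrow> bool" where
  "cle n t i j \<longleftrightarrow> crank n t i \<le> crank n t j"

text \<open>Gale order A <=_t B: with A = {i_1 <_t ... <_t i_k}, B = {j_1 <_t ... <_t j_k},
  i_s <=_t j_s for all s.  The s-th element in <=_t order is read off through the
  order embedding crank n t.\<close>
definition gale_le :: "nat \<Rightarrow> nat \<Rightarrow> nat set \<Rightarrow> nat set \<Rightarrow> bool" where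
  "gale_le n t A B \<longleftrightarrow> card A = card B \<and>
     (\<forall>s < card A. sorted_list_of_set (crank n t ` A) ! s
                    \<le> sorted_list_of_set (crank n t ` B) ! s)"

definition cmax :: "nat \<Rightarrow> nat \<Rightarrow> nat set \<Rightarrow> nat" where
  "cmax n a D = (THE x. x \<in> D \<and> (\<forall>y\<in>D. cle n a y x))"

text \<open>Grassmann necklace (indices in [n], I (n+1) read as I 1 via cyc_succ).\<close>
definition grassmann_necklace :: "nat \<Rightarrow> (nat \<Rightarrow> nat set) \<Rightarrow> bool" where
  "grassmann_necklace n I \<longleftrightarrow>
     (\<forall>i\<in>{1..n}. I i \<subseteq> {1..n}) \<and>
     (\<forall>i\<in>{1..n}.
        (i \<in> I i \<longrightarrow> (\<exists>j'\<in>{1..n}. I (cyc_succ n i) = (I i - {i}) \<union> {j'})) \<and>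
        (i \<notin> I i \<longrightarrow> I (cyc_succ n i) = I i))"

definition ksubsets :: "nat \<Rightarrow> nat \<Rightarrow> nat set set" where
  "ksubsets n k = {H. H \<subseteq> {1..n} \<and> card H = k}"

text \<open>M is a positroid in binom([n],k) with Grassmann necklace I
  (the I_t are k-subsets, as the Gale order is only defined on k-subsets).\<close>
definition positroid_necklace :: "nat \<Rightarrow> nat \<Rightarrow> nat set set \<Rightarrow> (nat \<Rightarrow> nat set) \<Rightarrow> bool" where
  "positroid_necklace n k M I \<longleftrightarrow>
     grassmann_necklace n I \<and> (\<forall>t\<in>{1..n}. card (I t) = k) \<and>
     M \<subseteq> ksubsets n k \<and>
     M = {H \<in> ksubsets n k. \<forall>t\<in>{1..n}. gale_le n t (I t) H}"

text \<open>Permutation part of the decorated permutation associated to the necklace.\<close>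
definition neck_perm :: "nat \<Rightarrow> (nat \<Rightarrow> nat set) \<Rightarrow> nat \<Rightarrow> nat" where
  "neck_perm n I i =
     (if i \<in> I i then (THE j'. j' \<in> {1..n} \<and> I (cyc_succ n i) = (I i - {i}) \<union> {j'})
      else i)"

definition neck_col :: "nat \<Rightarrow> (nat \<Rightarrow> nat set) \<Rightarrow> nat \<Rightarrow> int" where
  "neck_col n I i = (if i \<in> I i then -1 else 1)"

end

theory Submission
  imports Defs
begin

(* Write y <_t z for crank n t y < crank n t z, and let q = perm_inv be the inverse of the
   decorated permutation of the necklace.  The proof rests on three facts.
   (1) Membership formula: y is in I_r iff y <_r q(y), or y is a fixed point lying in I_y.
       It follows by walking around the necklace: y enters at step q(y) and leaves at step y.
   (2) Gale order by counting: A <=_t B holds as soon as every <=_t-initial segment S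
       contains at least as many elements of A as of B.
   (3) Transfer identity: for the arc U = [t, a) and any S, the counts |I_t \<inter> S| and
       |I_a \<inter> S| differ by the numbers of elements of S crossing the boundary of U under q;
       since q is a bijection, as many elements leave U as enter it.
   For H = (I_a - {m}) \<union> {j} with m = max_a (I_a - I_j), (1) locates m and j in the cyclic
   order, and the crossing counts of (3) pay for the single extra element j that H may put
   into an initial segment.  By (2) this gives I_t <=_t H for every t, i.e. H is in M.
   The file develops the cyclic orders, the counting criterion (2) and flow balance of
   bijections in general, then (1) and (3) in the locale necklace, and finally the exchange
   argument in the locale exchange, from which the theorem follows. *)

lemma crank_eq:
  assumes "t \<in> {1..n}" "y \<in> {1..n}"
  shows "crank n t y = (if t \<le> y then y - t else y + n - t)"
proof (cases "t \<le> y")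
  case True
  then have "y + n - t = (y - t) + n" by simp
  then have "(y + n - t) mod n = (y - t) mod n" by simp
  then show ?thesis using True assms by (simp add: crank_def)
next
  case False
  then show ?thesis using assms by (simp add: crank_def)
qed

lemma cyc_succ_eq: "i \<in> {1..n} \<Longrightarrow> cyc_succ n i = (if i = n then 1 else i + 1)"
  unfolding cyc_succ_def by auto

lemma cyc_succ_in: "i \<in> {1..n} \<Longrightarrow> cyc_succ n i \<in> {1..n}"
  by (simp add: cyc_succ_eq)

lemma crank_self: "t \<in> {1..n} \<Longrightarrow> crank n t t = 0"
  by (simp add: crank_eq)

lemma crank_inj:
  "t \<in> {1..n} \<Longrightarrow> y \<in> {1..n} \<Longrightarrow> z \<in> {1..n} \<Longrightarrow> crank n t y = crank n t z \<Longrightarrow> y = z"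
  by (auto simp: crank_eq split: if_splits)

lemma crank_inj_on: "t \<in> {1..n} \<Longrightarrow> inj_on (crank n t) {1..n}"
  by (meson crank_inj inj_onI)

lemma crank_pos: "t \<in> {1..n} \<Longrightarrow> y \<in> {1..n} \<Longrightarrow> y \<noteq> t \<Longrightarrow> 0 < crank n t y"
  using crank_inj crank_self by (metis gr0I)

(* Rotation principle: passing from <=_t to <=_a moves the arc [t, a) behind all other
   elements and keeps the order inside the arc and inside its complement.  All order
   comparisons below between different starting points are instances of this. *)
lemma crank_rotate:
  assumes "t \<in> {1..n}" "a \<in> {1..n}" "y \<in> {1..n}" "q \<in> {1..n}"
  shows "crank n a y < crank n a q \<longleftrightarrow>
    (if (crank n t y < crank n t a) = (crank n t q < crank n t a) then crank n t y < crank n t q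
     else crank n t q < crank n t a)"
  using assms by (auto simp: crank_eq split: if_splits)

lemma rotate_within_arc:
  "t \<in> {1..n} \<Longrightarrow> a \<in> {1..n} \<Longrightarrow> y \<in> {1..n} \<Longrightarrow> q \<in> {1..n} \<Longrightarrow>
   crank n t y < crank n t q \<Longrightarrow> crank n t q < crank n t a \<Longrightarrow> crank n a y < crank n a q"
  using crank_rotate[of t n a y q] by auto

lemma rotate_outside_arc:
  "t \<in> {1..n} \<Longrightarrow> a \<in> {1..n} \<Longrightarrow> y \<in> {1..n} \<Longrightarrow> q \<in> {1..n} \<Longrightarrow>
   crank n t a \<le> crank n t y \<Longrightarrow> crank n t y < crank n t q \<Longrightarrow> crank n a y < crank n a q"
  using crank_rotate[of t n a y q] by auto

lemma rotate_arc_to_end: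
  "t \<in> {1..n} \<Longrightarrow> a \<in> {1..n} \<Longrightarrow> y \<in> {1..n} \<Longrightarrow> q \<in> {1..n} \<Longrightarrow>
   crank n t a \<le> crank n t q \<Longrightarrow> crank n t y < crank n t a \<Longrightarrow> crank n a q < crank n a y"
  using crank_rotate[of t n a q y] by auto

lemma rotate_past_start:
  "t \<in> {1..n} \<Longrightarrow> j \<in> {1..n} \<Longrightarrow> y \<in> {1..n} \<Longrightarrow> q \<in> {1..n} \<Longrightarrow>
   crank n t y < crank n t j \<Longrightarrow> crank n t j < crank n t q \<Longrightarrow> crank n j q < crank n j y"
  using crank_rotate[of t n j q y] by auto

lemma rotate_stays_in_arc:
  assumes "t \<in> {1..n}" "a \<in> {1..n}" "j \<in> {1..n}" "q \<in> {1..n}"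
    and jt: "crank n t j < crank n t a" and ja: "crank n a j \<le> crank n a q"
  shows "crank n t q < crank n t a"
proof (rule ccontr)
  assume nq: "\<not> crank n t q < crank n t a"
  then have "j \<noteq> q" using jt by auto
  then have "crank n a j \<noteq> crank n a q" using crank_inj assms(2-4) by blast
  then have "crank n a j < crank n a q" using ja by simp
  then show False using crank_rotate[OF assms(1-4)] jt nq by simp
qed

lemma rotate_locates_start:
  assumes "a \<in> {1..n}" "m \<in> {1..n}" "q \<in> {1..n}" "j \<in> {1..n}"
    and "crank n a m < crank n a q" "\<not> crank n j m < crank n j q"
  shows "crank n a m < crank n a j \<and> crank n a j \<le> crank n a q"
proof -
  have "(crank n a m < crank n a j) \<noteq> (crank n a q < crank n a j) \<and> \<not> crank n a q < crank n a j"
    using crank_rotate[of a n j m q] assms by (auto split: if_splits)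
  then show ?thesis by auto
qed

lemma cyclic_arcs_cover:
  "i \<in> {1..n} \<Longrightarrow> i' \<in> {1..n} \<Longrightarrow> y \<in> {1..n} \<Longrightarrow> y \<noteq> i \<Longrightarrow> i \<noteq> i' \<Longrightarrow>
   crank n i' y < crank n i' i \<or> crank n i y < crank n i i'"
  using crank_rotate[of i n i' y i] crank_self[of i n] crank_pos[of i n i'] by auto

lemma crank_succ_start:
  "i \<in> {1..n} \<Longrightarrow> r \<in> {1..n} \<Longrightarrow> y \<in> {1..n} \<Longrightarrow> y \<noteq> i \<Longrightarrow>
   crank n r y < crank n r i \<Longrightarrow> \<not> crank n (cyc_succ n i) y < crank n (cyc_succ n i) r"
  by (cases "i = n") (auto simp: crank_eq cyc_succ_eq split: if_splits)

lemma crank_pred: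
  assumes r: "r \<in> {1..n}" and s: "s \<in> {1..n}" and c: "crank n s r = Suc d"
  shows "\<exists>r'\<in>{1..n}. cyc_succ n r' = r \<and> crank n s r' = d"
proof -
  define r' where "r' = (if r = 1 then n else r - 1)"
  have r': "r' \<in> {1..n}" using r unfolding r'_def by auto
  have "cyc_succ n r' = r" using r r' unfolding r'_def by (auto simp: cyc_succ_eq)
  moreover have "crank n s r' = d"
    using c r s r' crank_eq[OF s r'] crank_eq[OF s r] unfolding r'_def by (auto split: if_splits)
  ultimately show ?thesis using r' by blast
qed

definition cseg :: "nat \<Rightarrow> nat \<Rightarrow> nat \<Rightarrow> nat set" where
  "cseg n t x = {y \<in> {1..n}. crank n t y \<le> x}"

definition carc :: "nat \<Rightarrow> nat \<Rightarrow> nat \<Rightarrow> nat set" where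
  "carc n t a = {y \<in> {1..n}. crank n t y < crank n t a}"

lemma cmax_greatest:
  assumes a: "a \<in> {1..n}" and Dn: "D \<subseteq> {1..n}" and ne: "D \<noteq> {}"
  shows "cmax n a D \<in> D" "\<And>y. y \<in> D \<Longrightarrow> crank n a y \<le> crank n a (cmax n a D)"
proof -
  have fD: "finite D" using Dn finite_subset by blast
  have "Max (crank n a ` D) \<in> crank n a ` D" using fD ne by simp
  then obtain m where m: "m \<in> D" "crank n a m = Max (crank n a ` D)" by auto
  have mx: "\<forall>y\<in>D. crank n a y \<le> crank n a m" using m fD by simp
  have "cmax n a D = m" unfolding cmax_def cle_def
  proof (rule the_equality)
    show "m \<in> D \<and> (\<forall>y\<in>D. crank n a y \<le> crank n a m)" using m mx by simp
  next
    fix x assume x: "x \<in> D \<and> (\<forall>y\<in>D. crank n a y \<le> crank n a x)"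
    then have "crank n a x = crank n a m" using mx m by (meson le_antisym)
    then show "x = m" using crank_inj[OF a] x m Dn by blast
  qed
  then show "cmax n a D \<in> D" "\<And>y. y \<in> D \<Longrightarrow> crank n a y \<le> crank n a (cmax n a D)"
    using m mx by simp_all
qed

lemma sorted_nth_le_of_count:
  fixes U :: "'a::linorder set"
  assumes fU: "finite U" and s: "s < card {u\<in>U. u \<le> x}"
  shows "sorted_list_of_set U ! s \<le> x"
proof (rule ccontr)
  define L where "L = sorted_list_of_set U"
  assume "\<not> sorted_list_of_set U ! s \<le> x"
  then have lt: "x < L ! s" unfolding L_def by simp
  have setL: "set L = U" unfolding L_def using fU by simp
  have sL: "sorted L" unfolding L_def by simp
  have sub: "{u\<in>U. u \<le> x} \<subseteq> (\<lambda>i. L ! i) ` {..<s}"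
  proof
    fix u assume u: "u \<in> {u\<in>U. u \<le> x}"
    then obtain i where i: "i < length L" "u = L ! i"
      using setL by (metis (no_types, lifting) in_set_conv_nth mem_Collect_eq)
    have "i < s"
    proof (rule ccontr)
      assume "\<not> i < s"
      then have "L ! s \<le> L ! i" using sorted_nth_mono[OF sL] i(1) by simp
      moreover have "L ! i \<le> x" using u i(2) by simp
      ultimately have "L ! s \<le> x" by (rule order_trans)
      with lt have "x < x" by (rule order.strict_trans2)
      then show False by simp
    qed
    then show "u \<in> (\<lambda>i. L ! i) ` {..<s}" using i(2) by blast
  qed
  have "card {u\<in>U. u \<le> x} \<le> card ((\<lambda>i. L ! i) ` {..<s})" by (rule card_mono) (simp_all add: sub)
  also have "\<dots> \<le> card {..<s}" by (rule card_image_le) simp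
  finally show False using s by simp
qed

lemma count_le_sorted_nth:
  fixes U :: "'a::linorder set"
  assumes fU: "finite U" and s: "s < card U"
  shows "s < card {u\<in>U. u \<le> sorted_list_of_set U ! s}"
proof -
  define L where "L = sorted_list_of_set U"
  have setL: "set L = U" unfolding L_def using fU by simp
  have sL: "sorted L" unfolding L_def by simp
  have dL: "distinct L" unfolding L_def by simp
  have len: "length L = card U" unfolding L_def by simp
  have sub: "(\<lambda>i. L ! i) ` {..s} \<subseteq> {u\<in>U. u \<le> L ! s}"
  proof
    fix u assume "u \<in> (\<lambda>i. L ! i) ` {..s}"
    then obtain i where i: "i \<le> s" "u = L ! i" by blast
    have "L ! i \<le> L ! s" using sorted_nth_mono[OF sL i(1)] s len by simp
    moreover have "L ! i \<in> U" using setL i s len by (metis le_less_trans nth_mem)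
    ultimately show "u \<in> {u\<in>U. u \<le> L ! s}" using i by simp
  qed
  have inj: "inj_on (\<lambda>i. L ! i) {..s}"
    by (rule inj_onI) (use dL s len in \<open>simp add: nth_eq_iff_index_eq\<close>)
  have "card {..s} = card ((\<lambda>i. L ! i) ` {..s})" using card_image[OF inj] by simp
  also have "\<dots> \<le> card {u\<in>U. u \<le> L ! s}" by (rule card_mono) (use fU sub in simp_all)
  finally show ?thesis unfolding L_def by simp
qed

lemma sorted_nth_le_of_counts:
  fixes U V :: "'a::linorder set"
  assumes fU: "finite U" and fV: "finite V" and c: "card U = card V"
    and cnt: "\<And>x. card {v\<in>V. v \<le> x} \<le> card {u\<in>U. u \<le> x}"
    and s: "s < card U"
  shows "sorted_list_of_set U ! s \<le> sorted_list_of_set V ! s"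
proof -
  have "s < card {v\<in>V. v \<le> sorted_list_of_set V ! s}" using count_le_sorted_nth[OF fV] s c by simp
  also have "\<dots> \<le> card {u\<in>U. u \<le> sorted_list_of_set V ! s}" by (rule cnt)
  finally show ?thesis by (rule sorted_nth_le_of_count[OF fU])
qed

lemma gale_le_of_counts:
  assumes t: "t \<in> {1..n}" and A: "A \<subseteq> {1..n}" and B: "B \<subseteq> {1..n}" and c: "card A = card B"
    and cnt: "\<And>x. card (B \<inter> cseg n t x) \<le> card (A \<inter> cseg n t x)"
  shows "gale_le n t A B"
proof -
  have iA: "inj_on (crank n t) A" using inj_on_subset[OF crank_inj_on[OF t] A] .
  have iB: "inj_on (crank n t) B" using inj_on_subset[OF crank_inj_on[OF t] B] .
  have fA: "finite A" using A finite_subset by blast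
  have fB: "finite B" using B finite_subset by blast
  have count_image: "card {v\<in>crank n t ` X. v \<le> x} = card (X \<inter> cseg n t x)"
    if X: "X \<subseteq> {1..n}" for X x
  proof -
    have "{v\<in>crank n t ` X. v \<le> x} = crank n t ` (X \<inter> cseg n t x)"
      using X unfolding cseg_def by blast
    moreover have "inj_on (crank n t) (X \<inter> cseg n t x)"
      using inj_on_subset[OF crank_inj_on[OF t]] X by blast
    ultimately show ?thesis by (simp add: card_image)
  qed
  have cA: "card (crank n t ` A) = card A" using card_image[OF iA] .
  have cB: "card (crank n t ` B) = card B" using card_image[OF iB] .
  have cnt': "card {v\<in>crank n t ` B. v \<le> x} \<le> card {v\<in>crank n t ` A. v \<le> x}" for x
    unfolding count_image[OF A] count_image[OF B] by (rule cnt)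
  show ?thesis unfolding gale_le_def
  proof (intro conjI allI impI)
    show "card A = card B" by (rule c)
    fix s assume s: "s < card A"
    show "sorted_list_of_set (crank n t ` A) ! s \<le> sorted_list_of_set (crank n t ` B) ! s"
    proof (rule sorted_nth_le_of_counts)
      show "finite (crank n t ` A)" "finite (crank n t ` B)" using fA fB by simp_all
      show "card (crank n t ` A) = card (crank n t ` B)" using cA cB c by simp
      show "s < card (crank n t ` A)" using cA s by simp
    qed (rule cnt')
  qed
qed

lemma bij_flow_balance:
  assumes f: "bij_betw f X X" and fX: "finite X" and U: "U \<subseteq> X"
  shows "card {u\<in>U. f u \<notin> U} = card {x\<in>X - U. f x \<in> U}"
proof -
  have fU: "finite U" using U fX finite_subset by blast
  have "bij_betw f {x\<in>X. f x \<in> U} U"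
    unfolding bij_betw_def
  proof
    show "inj_on f {x\<in>X. f x \<in> U}" by (rule inj_on_subset[OF bij_betw_imp_inj_on[OF f]]) blast
    show "f ` {x\<in>X. f x \<in> U} = U"
    proof
      show "U \<subseteq> f ` {x\<in>X. f x \<in> U}"
      proof
        fix u assume u: "u \<in> U"
        then have "u \<in> f ` X" using U bij_betw_imp_surj_on[OF f] by blast
        then obtain x where "x \<in> X" "u = f x" by blast
        then show "u \<in> f ` {x\<in>X. f x \<in> U}" using u by blast
      qed
    qed blast
  qed
  then have "card {x\<in>X. f x \<in> U} = card U" by (rule bij_betw_same_card)
  moreover have "card {x\<in>X. f x \<in> U} = card {u\<in>U. f u \<in> U} + card {x\<in>X - U. f x \<in> U}"
  proof -
    have "{x\<in>X. f x \<in> U} = {u\<in>U. f u \<in> U} \<union> {x\<in>X - U. f x \<in> U}" using U by blast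
    moreover have "card ({u\<in>U. f u \<in> U} \<union> {x\<in>X - U. f x \<in> U})
        = card {u\<in>U. f u \<in> U} + card {x\<in>X - U. f x \<in> U}"
      by (rule card_Un_disjoint) (use fX fU in auto)
    ultimately show ?thesis by simp
  qed
  moreover have "card U = card {u\<in>U. f u \<in> U} + card {u\<in>U. f u \<notin> U}"
  proof -
    have "U = {u\<in>U. f u \<in> U} \<union> {u\<in>U. f u \<notin> U}" by blast
    moreover have "card ({u\<in>U. f u \<in> U} \<union> {u\<in>U. f u \<notin> U})
        = card {u\<in>U. f u \<in> U} + card {u\<in>U. f u \<notin> U}"
      by (rule card_Un_disjoint) (use fU in auto)
    ultimately show ?thesis by simp
  qed
  ultimately show ?thesis by simp
qed

lemma card_exchange_le:
  assumes fS: "finite S" and m: "m \<in> A" and j: "j \<notin> A"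
  shows "card (((A - {m}) \<union> {j}) \<inter> S) \<le> card (A \<inter> S) + (if j \<in> S \<and> m \<notin> S then 1 else 0)"
proof (cases "m \<in> S")
  case True
  have "((A - {m}) \<union> {j}) \<inter> S \<subseteq> insert j ((A \<inter> S) - {m})" by blast
  then have "card (((A - {m}) \<union> {j}) \<inter> S) \<le> card (insert j ((A \<inter> S) - {m}))"
    by (rule card_mono[rotated]) (use fS in simp)
  also have "\<dots> \<le> Suc (card ((A \<inter> S) - {m}))" by (rule card_insert_le_m1) simp_all
  also have "\<dots> = card (A \<inter> S)"
  proof -
    have mi: "m \<in> A \<inter> S" using True m by simp
    then have "card (A \<inter> S) \<noteq> 0" using fS by auto
    then show ?thesis using card_Diff_singleton[OF mi] by simp
  qed
  finally show ?thesis by simp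
next
  case False
  show ?thesis
  proof (cases "j \<in> S")
    case True
    have e: "((A - {m}) \<union> {j}) \<inter> S = insert j (A \<inter> S)" using True False by blast
    have "card (insert j (A \<inter> S)) = Suc (card (A \<inter> S))" using j fS by simp
    then show ?thesis unfolding e using True False by simp
  next
    case False
    have "((A - {m}) \<union> {j}) \<inter> S \<subseteq> A \<inter> S" using False by blast
    then have "card (((A - {m}) \<union> {j}) \<inter> S) \<le> card (A \<inter> S)"
      by (rule card_mono[rotated]) (use fS in simp)
    moreover have "(if j \<in> S \<and> m \<notin> S then 1 else 0) = (0::nat)" using False by simp
    ultimately show ?thesis by linarith
  qed
qed

lemma card_swap_notin:
  assumes "finite A" "i \<in> A" "card ((A - {i}) \<union> {x}) = card A"
  shows "x \<notin> A - {i}"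
proof
  assume "x \<in> A - {i}"
  then have "(A - {i}) \<union> {x} = A - {i}" by auto
  then have "card ((A - {i}) \<union> {x}) = card A - 1" using assms by (simp add: card_Diff_singleton)
  moreover have "card A \<noteq> 0" using assms by auto
  ultimately show False using assms(3) by simp
qed

locale necklace =
  fixes n k :: nat and I :: "nat \<Rightarrow> nat set"
  assumes grassmann: "grassmann_necklace n I"
    and card_I: "\<And>t. t \<in> {1..n} \<Longrightarrow> card (I t) = k"
begin

abbreviation perm :: "nat \<Rightarrow> nat" where
  "perm \<equiv> neck_perm n I"

lemma I_subset: "t \<in> {1..n} \<Longrightarrow> I t \<subseteq> {1..n}"
  using grassmann unfolding grassmann_necklace_def by blast

lemma I_finite: "t \<in> {1..n} \<Longrightarrow> finite (I t)"
  using I_subset finite_subset by blast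

lemma step_member:
  assumes i: "i \<in> {1..n}" and ii: "i \<in> I i"
  shows "perm i \<in> {1..n}" "I (cyc_succ n i) = (I i - {i}) \<union> {perm i}" "perm i \<notin> I i - {i}"
proof -
  have "\<forall>i\<in>{1..n}. i \<in> I i \<longrightarrow> (\<exists>j'\<in>{1..n}. I (cyc_succ n i) = (I i - {i}) \<union> {j'})"
    using grassmann unfolding grassmann_necklace_def by blast
  then have ex: "\<exists>j'\<in>{1..n}. I (cyc_succ n i) = (I i - {i}) \<union> {j'}" using i ii by blast
  have new: "x \<notin> I i - {i}" if "I (cyc_succ n i) = (I i - {i}) \<union> {x}" for x
  proof (rule card_swap_notin[OF I_finite[OF i] ii])
    show "card ((I i - {i}) \<union> {x}) = card (I i)"
      using that card_I[OF i] card_I[OF cyc_succ_in[OF i]] by simp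
  qed
  from ex obtain j' where j': "j' \<in> {1..n}" "I (cyc_succ n i) = (I i - {i}) \<union> {j'}" by blast
  have "perm i = (THE j'. j' \<in> {1..n} \<and> I (cyc_succ n i) = (I i - {i}) \<union> {j'})"
    using ii by (simp add: neck_perm_def)
  also have "\<dots> = j'"
  proof (rule the_equality)
    show "j' \<in> {1..n} \<and> I (cyc_succ n i) = (I i - {i}) \<union> {j'}" using j' by simp
  next
    fix x assume "x \<in> {1..n} \<and> I (cyc_succ n i) = (I i - {i}) \<union> {x}"
    then show "x = j'" using new[of x] new[of j'] j'(2) by blast
  qed
  finally show "perm i \<in> {1..n}" "I (cyc_succ n i) = (I i - {i}) \<union> {perm i}" "perm i \<notin> I i - {i}"
    using j' new by auto
qed

lemma step_nonmember:
  assumes i: "i \<in> {1..n}" and ii: "i \<notin> I i"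
  shows "perm i = i" "I (cyc_succ n i) = I i"
proof -
  show "perm i = i" using ii by (simp add: neck_perm_def)
  have "\<forall>i\<in>{1..n}. i \<notin> I i \<longrightarrow> I (cyc_succ n i) = I i"
    using grassmann unfolding grassmann_necklace_def by blast
  then show "I (cyc_succ n i) = I i" using i ii by blast
qed

lemma perm_in:
  assumes i: "i \<in> {1..n}"
  shows "perm i \<in> {1..n}"
proof (cases "i \<in> I i")
  case True
  then show ?thesis using step_member(1)[OF i] by blast
next
  case False
  then show ?thesis using step_nonmember(1)[OF i] i by simp
qed

lemma stays_member:
  assumes i: "i \<in> {1..n}" and y: "y \<in> I i" and d: "i \<noteq> y \<or> perm i = i"
  shows "y \<in> I (cyc_succ n i)"
proof (cases "i \<in> I i")
  case True
  have "y \<in> (I i - {i}) \<union> {perm i}" using y d by auto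
  then show ?thesis using step_member(2)[OF i True] by simp
next
  case False
  then show ?thesis using step_nonmember(2)[OF i False] y by simp
qed

lemma persists:
  assumes s: "s \<in> {1..n}" and r: "r \<in> {1..n}" and y: "y \<in> I s"
    and kept: "\<And>z. z \<in> {1..n} \<Longrightarrow> crank n s z < crank n s r \<Longrightarrow> y \<in> I z \<Longrightarrow> y \<in> I (cyc_succ n z)"
  shows "y \<in> I r"
proof -
  have "\<forall>r'\<in>{1..n}. crank n s r' = d \<longrightarrow> d \<le> crank n s r \<longrightarrow> y \<in> I r'" for d
  proof (induction d)
    case 0
    show ?case using y crank_eq[OF s] s by (auto split: if_splits)
  next
    case (Suc d)
    show ?case
    proof (intro ballI impI)
      fix r' assume r': "r' \<in> {1..n}" "crank n s r' = Suc d" "Suc d \<le> crank n s r"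
      obtain q where q: "q \<in> {1..n}" "cyc_succ n q = r'" "crank n s q = d"
        using crank_pred[OF r'(1) s r'(2)] by blast
      have "y \<in> I q" using Suc.IH q(1,3) r'(3) by simp
      then have "y \<in> I (cyc_succ n q)" using kept q(1,3) r'(3) by simp
      then show "y \<in> I r'" using q by simp
    qed
  qed
  then show ?thesis using r by blast
qed

lemma persists_until_exchanged:
  assumes s: "s \<in> {1..n}" and r: "r \<in> {1..n}" and y: "y \<in> I s"
    and not_passed: "\<And>z. z \<in> {1..n} \<Longrightarrow> crank n s z < crank n s r \<Longrightarrow> z \<noteq> y"
  shows "y \<in> I r"
  using persists[OF s r y] not_passed stays_member by blast

lemma fixed_point_mem:
  assumes i: "i \<in> {1..n}" and f: "perm i = i" and r: "r \<in> {1..n}"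
  shows "i \<in> I r \<longleftrightarrow> i \<in> I i"
proof
  assume "i \<in> I r"
  then show "i \<in> I i" by (rule persists_until_exchanged[OF r i]) (metis less_irrefl)
next
  assume "i \<in> I i"
  then show "i \<in> I r" by (rule persists[OF i r]) (use stays_member f in blast)
qed

lemma non_fixed_step:
  assumes i: "i \<in> {1..n}" and f: "perm i \<noteq> i"
  shows "i \<in> I i" "perm i \<notin> I i" "I (cyc_succ n i) = (I i - {i}) \<union> {perm i}"
  using step_member[OF i] step_nonmember[OF i] f by auto

(* The value perm i of a non-fixed point lies in I_r exactly when it precedes i in <=_r:
   it enters the necklace at step i and leaves at step perm i. *)
lemma non_fixed_mem:
  assumes i: "i \<in> {1..n}" and f: "perm i \<noteq> i" and r: "r \<in> {1..n}"
  shows "perm i \<in> I r \<longleftrightarrow> crank n r (perm i) < crank n r i"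
proof
  assume a: "perm i \<in> I r"
  show "crank n r (perm i) < crank n r i"
  proof (rule ccontr)
    assume "\<not> crank n r (perm i) < crank n r i"
    then have "perm i \<in> I i"
      by (intro persists_until_exchanged[OF r i a]) (metis less_irrefl)
    then show False using non_fixed_step[OF i f] by blast
  qed
next
  assume a: "crank n r (perm i) < crank n r i"
  have "perm i \<in> I (cyc_succ n i)" using non_fixed_step[OF i f] by blast
  then show "perm i \<in> I r"
  proof (rule persists_until_exchanged[OF cyc_succ_in[OF i] r])
    fix z assume "z \<in> {1..n}" "crank n (cyc_succ n i) z < crank n (cyc_succ n i) r"
    then show "z \<noteq> perm i" using crank_succ_start[OF i r perm_in[OF i] f a] by blast
  qed
qed

lemma fixed_not_value:
  assumes i: "i \<in> {1..n}" and i': "i' \<in> {1..n}" and fi: "perm i = i" and fi': "perm i' \<noteq> i'"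
  shows "perm i' \<noteq> i"
proof
  assume "perm i' = i"
  then have "i \<notin> I i'" "i \<in> I (cyc_succ n i')" using non_fixed_step[OF i' fi'] by auto
  then show False using fixed_point_mem[OF i fi i'] fixed_point_mem[OF i fi cyc_succ_in[OF i']] by simp
qed

(* ... and two different non-fixed points have different values, because each value
   perm i lies in I_r exactly for r in the cyclic interval (i, perm i]. *)
lemma non_fixed_values_distinct:
  assumes i: "i \<in> {1..n}" and i': "i' \<in> {1..n}" and ne: "i \<noteq> i'"
    and fi: "perm i \<noteq> i" and fi': "perm i' \<noteq> i'"
  shows "perm i \<noteq> perm i'"
proof
  assume e: "perm i = perm i'"
  have "\<not> crank n i' (perm i) < crank n i' i"
    using non_fixed_mem[OF i fi i'] non_fixed_step(2)[OF i' fi'] e by simp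
  moreover have "\<not> crank n i (perm i) < crank n i i'"
    using non_fixed_mem[OF i' fi' i] non_fixed_step(2)[OF i fi] e by simp
  ultimately show False using cyclic_arcs_cover[OF i i' perm_in[OF i] fi ne] by blast
qed

lemma perm_bij: "bij_betw perm {1..n} {1..n}"
proof -
  have inj: "inj_on perm {1..n}"
  proof (rule inj_onI)
    fix i i' assume i: "i \<in> {1..n}" and i': "i' \<in> {1..n}" and e: "perm i = perm i'"
    consider (both) "perm i = i" "perm i' = i'" | (first) "perm i = i" "perm i' \<noteq> i'"
      | (second) "perm i \<noteq> i" "perm i' = i'" | (neither) "perm i \<noteq> i" "perm i' \<noteq> i'"
      by blast
    then show "i = i'"
    proof cases
      case both
      then show ?thesis using e by metis
    next
      case first
      then show ?thesis using fixed_not_value[OF i i' first] e by metis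
    next
      case second
      then show ?thesis using fixed_not_value[OF i' i second(2,1)] e by metis
    next
      case neither
      then show ?thesis using non_fixed_values_distinct[OF i i' _ neither] e by metis
    qed
  qed
  have "perm ` {1..n} \<subseteq> {1..n}" using perm_in by blast
  then have "perm ` {1..n} = {1..n}" using endo_inj_surj[OF finite_atLeastAtMost _ inj] by blast
  with inj show ?thesis unfolding bij_betw_def by blast
qed

definition perm_inv :: "nat \<Rightarrow> nat" where
  "perm_inv = the_inv_into {1..n} perm"

lemma perm_inv_bij: "bij_betw perm_inv {1..n} {1..n}"
  unfolding perm_inv_def by (rule bij_betw_the_inv_into[OF perm_bij])

lemma perm_inv_in: "y \<in> {1..n} \<Longrightarrow> perm_inv y \<in> {1..n}"
  using perm_inv_bij bij_betwE by blast

lemma perm_perm_inv: "y \<in> {1..n} \<Longrightarrow> perm (perm_inv y) = y"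
  unfolding perm_inv_def using f_the_inv_into_f_bij_betw[OF perm_bij] by blast

lemma perm_inv_perm: "i \<in> {1..n} \<Longrightarrow> perm_inv (perm i) = i"
  unfolding perm_inv_def using the_inv_into_f_f[OF bij_betw_imp_inj_on[OF perm_bij]] by blast

(* Fact (1) of the overview: the necklace is recovered from its decorated permutation. *)
lemma mem_I_iff:
  assumes y: "y \<in> {1..n}" and r: "r \<in> {1..n}"
  shows "y \<in> I r \<longleftrightarrow>
    (perm_inv y \<noteq> y \<and> crank n r y < crank n r (perm_inv y)) \<or> (perm_inv y = y \<and> y \<in> I y)"
proof (cases "perm_inv y = y")
  case True
  then have "perm y = y" using perm_perm_inv[OF y] by simp
  then show ?thesis using fixed_point_mem[OF y _ r] True by simp
next
  case False
  then have "perm (perm_inv y) \<noteq> perm_inv y" using perm_perm_inv[OF y] by simp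
  then show ?thesis using non_fixed_mem[OF perm_inv_in[OF y] _ r] perm_perm_inv[OF y] False by simp
qed

lemma flow_balance:
  "U \<subseteq> {1..n} \<Longrightarrow> card {y\<in>U. perm_inv y \<notin> U} = card {z\<in>{1..n} - U. perm_inv z \<in> U}"
  by (rule bij_flow_balance[OF perm_inv_bij]) simp_all

(* Passing from I_t to I_a: inside the arc U = [t, a) an element of I_t is dropped exactly
   when perm_inv carries it out of U, outside U an element is added exactly when
   perm_inv carries it into U. *)
lemma transfer_mem:
  assumes t: "t \<in> {1..n}" and a: "a \<in> {1..n}" and y: "y \<in> {1..n}"
  shows "y \<in> carc n t a \<Longrightarrow>
      (y \<in> I t \<longleftrightarrow> y \<in> I a \<or> perm_inv y \<notin> carc n t a) \<and> (y \<in> I a \<longrightarrow> perm_inv y \<in> carc n t a)"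
    and "y \<notin> carc n t a \<Longrightarrow>
      (y \<in> I a \<longleftrightarrow> y \<in> I t \<or> perm_inv y \<in> carc n t a) \<and> (y \<in> I t \<longrightarrow> perm_inv y \<notin> carc n t a)"
proof -
  define q where "q = perm_inv y"
  have q: "q \<in> {1..n}" unfolding q_def using perm_inv_in[OF y] .
  have q_in_arc: "q \<in> carc n t a \<longleftrightarrow> crank n t q < crank n t a" using q by (simp add: carc_def)
  have mem_t: "y \<in> I t \<longleftrightarrow> (q \<noteq> y \<and> crank n t y < crank n t q) \<or> (q = y \<and> y \<in> I y)"
    unfolding q_def by (rule mem_I_iff[OF y t])
  have mem_a: "y \<in> I a \<longleftrightarrow> (q \<noteq> y \<and> crank n a y < crank n a q) \<or> (q = y \<and> y \<in> I y)"
    unfolding q_def by (rule mem_I_iff[OF y a])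
  have distinct: "q \<noteq> y \<Longrightarrow> crank n t y \<noteq> crank n t q" using crank_inj[OF t y q] by blast
  note rot = crank_rotate[OF t a y q]
  show "y \<in> carc n t a \<Longrightarrow>
      (y \<in> I t \<longleftrightarrow> y \<in> I a \<or> perm_inv y \<notin> carc n t a) \<and> (y \<in> I a \<longrightarrow> perm_inv y \<in> carc n t a)"
    using mem_t mem_a distinct rot q_in_arc unfolding q_def[symmetric]
    by (cases "q = y") (auto simp: carc_def)
  show "y \<notin> carc n t a \<Longrightarrow>
      (y \<in> I a \<longleftrightarrow> y \<in> I t \<or> perm_inv y \<in> carc n t a) \<and> (y \<in> I t \<longrightarrow> perm_inv y \<notin> carc n t a)"
    using mem_t mem_a distinct rot q_in_arc y unfolding q_def[symmetric]
    by (cases "q = y") (auto simp: carc_def)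
qed

lemma transfer_count:
  assumes t: "t \<in> {1..n}" and a: "a \<in> {1..n}" and S: "S \<subseteq> {1..n}"
  defines "U \<equiv> carc n t a"
  shows "card (I t \<inter> S) + card {y \<in> S - U. perm_inv y \<in> U}
       = card (I a \<inter> S) + card {y \<in> S \<inter> U. perm_inv y \<notin> U}"
proof -
  have fS: "finite S" using S finite_subset by blast
  have in_U: "I t \<inter> (S \<inter> U) = (I a \<inter> (S \<inter> U)) \<union> {y \<in> S \<inter> U. perm_inv y \<notin> U}"
    "(I a \<inter> (S \<inter> U)) \<inter> {y \<in> S \<inter> U. perm_inv y \<notin> U} = {}"
    using transfer_mem(1)[OF t a] S unfolding U_def by blast+
  have out_U: "I a \<inter> (S - U) = (I t \<inter> (S - U)) \<union> {y \<in> S - U. perm_inv y \<in> U}"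
    "(I t \<inter> (S - U)) \<inter> {y \<in> S - U. perm_inv y \<in> U} = {}"
    using transfer_mem(2)[OF t a] S unfolding U_def by blast+
  have split: "card (X \<inter> S) = card (X \<inter> (S \<inter> U)) + card (X \<inter> (S - U))" for X
  proof -
    have "X \<inter> S = (X \<inter> (S \<inter> U)) \<union> (X \<inter> (S - U))" by blast
    then show ?thesis using fS card_Un_disjoint[of "X \<inter> (S \<inter> U)" "X \<inter> (S - U)"] by auto
  qed
  show ?thesis
    using split[of "I t"] split[of "I a"] fS
      card_Un_disjoint[of "I a \<inter> (S \<inter> U)" "{y \<in> S \<inter> U. perm_inv y \<notin> U}"]
      card_Un_disjoint[of "I t \<inter> (S - U)" "{y \<in> S - U. perm_inv y \<in> U}"]
    unfolding in_U(1) out_U(1) in_U(2) out_U(2) by simp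
qed

end

locale exchange = necklace +
  fixes j a :: nat
  assumes j_in: "j \<in> {1..n}" and j_moves: "perm j \<noteq> j"
    and a_in: "a \<in> {1..n}" and j_notin: "j \<notin> I a"
begin

definition m :: nat where
  "m = cmax n a (I a - I j)"

definition H :: "nat set" where
  "H = (I a - {m}) \<union> {j}"

lemma diff_nonempty: "I a - I j \<noteq> {}"
proof
  assume "I a - I j = {}"
  then have "I a \<subseteq> I j" by blast
  moreover have "card (I a) = card (I j)" using card_I a_in j_in by simp
  ultimately have "I a = I j" using card_subset_eq[OF I_finite[OF j_in]] by blast
  then show False using non_fixed_step(1)[OF j_in j_moves] j_notin by simp
qed

lemma m_mem: "m \<in> I a" "m \<notin> I j" "m \<in> {1..n}"
  using cmax_greatest(1)[OF a_in _ diff_nonempty] I_subset[OF a_in] unfolding m_def by blast+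

lemma m_greatest: "y \<in> I a \<Longrightarrow> y \<notin> I j \<Longrightarrow> crank n a y \<le> crank n a m"
  using cmax_greatest(2)[OF a_in _ diff_nonempty] I_subset[OF a_in] unfolding m_def by blast

lemma m_position:
  "perm_inv m \<noteq> m" "crank n a m < crank n a j" "crank n a j \<le> crank n a (perm_inv m)"
proof -
  note mem_a = mem_I_iff[OF m_mem(3) a_in] and mem_j = mem_I_iff[OF m_mem(3) j_in]
  show moves: "perm_inv m \<noteq> m" using mem_a mem_j m_mem(1,2) by blast
  have "crank n a m < crank n a (perm_inv m)" using mem_a m_mem(1) moves by simp
  moreover have "\<not> crank n j m < crank n j (perm_inv m)" using mem_j m_mem(2) moves by simp
  ultimately show "crank n a m < crank n a j" "crank n a j \<le> crank n a (perm_inv m)"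
    using rotate_locates_start[OF a_in m_mem(3) perm_inv_in[OF m_mem(3)] j_in] by simp_all
qed

lemma H_subset: "H \<subseteq> {1..n}"
  unfolding H_def using I_subset[OF a_in] j_in by blast

lemma H_ksubset: "H \<in> ksubsets n k"
proof -
  have "0 < card (I a)" using m_mem(1) I_finite[OF a_in] card_gt_0_iff by blast
  then have "k \<noteq> 0" using card_I[OF a_in] by simp
  moreover have "card (I a - {m}) = k - 1" using card_Diff_singleton[OF m_mem(1)] card_I[OF a_in] by simp
  moreover have "j \<notin> I a - {m}" using j_notin by blast
  ultimately have "card H = k" unfolding H_def using I_finite[OF a_in] by simp
  then show ?thesis unfolding ksubsets_def using H_subset by simp
qed

(* Segments containing a: the crossing element m pays for the extra element j. *)
lemma flow_bound_long:
  assumes t: "t \<in> {1..n}" and ax: "crank n t a \<le> x"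
  defines "S \<equiv> cseg n t x" and "U \<equiv> carc n t a"
  shows "card {y \<in> S - U. perm_inv y \<in> U} + (if j \<in> S \<and> m \<notin> S then 1 else 0)
       \<le> card {y \<in> S \<inter> U. perm_inv y \<notin> U}"
proof -
  have SU: "S \<inter> U = U" unfolding S_def U_def cseg_def carc_def using ax by auto
  have "U \<subseteq> {1..n}" unfolding U_def carc_def by blast
  then have out: "card {y \<in> S \<inter> U. perm_inv y \<notin> U} = card {z \<in> {1..n} - U. perm_inv z \<in> U}"
    unfolding SU by (rule flow_balance)
  have into: "{y \<in> S - U. perm_inv y \<in> U} \<subseteq> {z \<in> {1..n} - U. perm_inv z \<in> U}"
    unfolding S_def cseg_def by blast
  show ?thesis
  proof (cases "j \<in> S \<and> m \<notin> S")
    case False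
    have "card {y \<in> S - U. perm_inv y \<in> U} \<le> card {z \<in> {1..n} - U. perm_inv z \<in> U}"
      by (rule card_mono[OF _ into]) simp
    moreover have "(if j \<in> S \<and> m \<notin> S then 1 else 0) = (0::nat)" using False by simp
    ultimately show ?thesis using out by linarith
  next
    case True
    then have jx: "crank n t j \<le> x" and mx: "x < crank n t m"
      using m_mem(3) unfolding S_def cseg_def by auto
    have ja: "crank n t j < crank n t a"
    proof (rule ccontr)
      assume "\<not> crank n t j < crank n t a"
      then have "crank n a j < crank n a m"
        using rotate_outside_arc[OF t a_in j_in m_mem(3)] jx mx by simp
      then show False using m_position(2) by simp
    qed
    have "perm_inv m \<in> U"
      using rotate_stays_in_arc[OF t a_in j_in perm_inv_in[OF m_mem(3)] ja m_position(3)]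
        perm_inv_in[OF m_mem(3)] unfolding U_def carc_def by simp
    moreover have "m \<notin> U" using ax mx unfolding U_def carc_def by simp
    ultimately have "insert m {y \<in> S - U. perm_inv y \<in> U} \<subseteq> {z \<in> {1..n} - U. perm_inv z \<in> U}"
      using into m_mem(3) by blast
    then have "card (insert m {y \<in> S - U. perm_inv y \<in> U}) \<le> card {z \<in> {1..n} - U. perm_inv z \<in> U}"
      by (rule card_mono[rotated]) simp
    moreover have "m \<notin> {y \<in> S - U. perm_inv y \<in> U}" using True by blast
    ultimately show ?thesis using True out unfolding S_def cseg_def by simp
  qed
qed

(* Segments ending before a, in the case j \<in> S, m \<notin> S: here a <=_t m, j <_t a, and
   every element of I_a strictly before j in <=_t also belongs to I_j, by maximality of m. *)
lemma early_mem_I_j: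
  assumes t: "t \<in> {1..n}" and am: "crank n t a \<le> crank n t m" and ja: "crank n t j < crank n t a"
    and y: "y \<in> {1..n}" and yj: "crank n t y < crank n t j" and ya: "y \<in> I a"
  shows "y \<in> I j"
proof (rule ccontr)
  assume "y \<notin> I j"
  then have "crank n a y \<le> crank n a m" using m_greatest ya by blast
  moreover have "crank n a m < crank n a y"
    using rotate_arc_to_end[OF t a_in y m_mem(3) am] yj ja by simp
  ultimately show False by simp
qed

lemma perm_j_after_j:
  assumes t: "t \<in> {1..n}" and am: "crank n t a \<le> crank n t m" and ja: "crank n t j < crank n t a"
  shows "crank n t j < crank n t (perm j)"
proof (rule ccontr)
  define w where "w = perm j"
  have w: "w \<in> {1..n}" "perm_inv w = j" "w \<noteq> j"
    unfolding w_def using perm_in[OF j_in] perm_inv_perm[OF j_in] j_moves by auto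
  assume "\<not> crank n t j < crank n t (perm j)"
  then have "crank n t w < crank n t j" using crank_inj[OF t w(1) j_in] w(3) unfolding w_def by fastforce
  moreover from this have "crank n a w < crank n a j" using rotate_within_arc[OF t a_in w(1) j_in] ja by simp
  then have "w \<in> I a" using mem_I_iff[OF w(1) a_in] w(2,3) by simp
  ultimately have "w \<in> I j" using early_mem_I_j[OF t am ja w(1)] by blast
  then show False using mem_I_iff[OF w(1) j_in] w(2,3) crank_self[OF j_in] by simp
qed

lemma no_return_into_arc:
  assumes t: "t \<in> {1..n}" and am: "crank n t a \<le> crank n t m" and ja: "crank n t j < crank n t a"
    and y: "y \<in> {1..n}" and yj: "crank n t y \<le> crank n t j"
    and jq: "crank n t j < crank n t (perm_inv y)"
  shows "\<not> crank n t (perm_inv y) < crank n t a"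
proof
  assume qa: "crank n t (perm_inv y) < crank n t a"
  have q: "perm_inv y \<in> {1..n}" using perm_inv_in[OF y] .
  show False
  proof (cases "y = j")
    case True
    then have "crank n a j < crank n a (perm_inv j)"
      using rotate_within_arc[OF t a_in j_in perm_inv_in[OF j_in]] jq qa by simp
    moreover have "perm_inv j \<noteq> j" using perm_perm_inv[OF j_in] j_moves by metis
    ultimately show False using mem_I_iff[OF j_in a_in] j_notin by simp
  next
    case False
    then have yj': "crank n t y < crank n t j" using yj crank_inj[OF t y j_in] by fastforce
    have moves: "perm_inv y \<noteq> y" using yj jq by auto
    have "crank n a y < crank n a (perm_inv y)"
      using rotate_within_arc[OF t a_in y q] yj' jq qa by simp
    then have "y \<in> I a" using mem_I_iff[OF y a_in] moves by simp
    then have "y \<in> I j" using early_mem_I_j[OF t am ja y yj'] by blast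
    moreover have "crank n j (perm_inv y) < crank n j y"
      using rotate_past_start[OF t j_in y q yj' jq] .
    ultimately show False using mem_I_iff[OF y j_in] moves by simp
  qed
qed

(* Segments ending before a that contain j but not m: some element of the segment is
   carried by perm_inv out of the arc [t, a), which pays for the extra element j. *)
lemma flow_bound_short:
  assumes t: "t \<in> {1..n}" and xa: "x < crank n t a"
    and jS: "j \<in> cseg n t x" and mS: "m \<notin> cseg n t x"
  shows "\<exists>y \<in> cseg n t x \<inter> carc n t a. perm_inv y \<notin> carc n t a"
proof -
  have jx: "crank n t j \<le> x" and mx: "x < crank n t m"
    using jS mS m_mem(3) unfolding cseg_def by auto
  have ja: "crank n t j < crank n t a" using jx xa by simp
  have am: "crank n t a \<le> crank n t m"
  proof (rule ccontr)
    assume "\<not> crank n t a \<le> crank n t m"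
    then have "crank n a j < crank n a m"
      using rotate_within_arc[OF t a_in j_in m_mem(3)] jx mx by simp
    then show False using m_position(2) by simp
  qed
  define P where "P = cseg n t (crank n t j)"
  have "perm j \<in> {z \<in> {1..n} - P. perm_inv z \<in> P}"
    using perm_j_after_j[OF t am ja] perm_in[OF j_in] perm_inv_perm[OF j_in] j_in
    unfolding P_def cseg_def by simp
  then have "card {z \<in> {1..n} - P. perm_inv z \<in> P} \<noteq> 0" by (auto simp: card_eq_0_iff)
  moreover have "P \<subseteq> {1..n}" unfolding P_def cseg_def by blast
  ultimately have "card {y \<in> P. perm_inv y \<notin> P} \<noteq> 0" using flow_balance by simp
  then obtain y where y: "y \<in> P" "perm_inv y \<notin> P" by (metis (no_types, lifting) card.empty empty_Collect_eq)
  have yn: "y \<in> {1..n}" and yj: "crank n t y \<le> crank n t j" using y(1) unfolding P_def cseg_def by auto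
  have jq: "crank n t j < crank n t (perm_inv y)"
    using y(2) perm_inv_in[OF yn] unfolding P_def cseg_def by simp
  have "y \<in> cseg n t x \<inter> carc n t a" using yn yj jx ja unfolding cseg_def carc_def by simp
  moreover have "perm_inv y \<notin> carc n t a"
    using no_return_into_arc[OF t am ja yn yj jq] unfolding carc_def by simp
  ultimately show ?thesis by blast
qed

lemma gale_H:
  assumes t: "t \<in> {1..n}"
  shows "gale_le n t (I t) H"
proof (rule gale_le_of_counts[OF t I_subset[OF t] H_subset])
  show "card (I t) = card H" using H_ksubset card_I[OF t] unfolding ksubsets_def by simp
  fix x
  define S U where "S = cseg n t x" and "U = carc n t a"
  define e :: nat where "e = (if j \<in> S \<and> m \<notin> S then 1 else 0)"
  have fS: "finite S" unfolding S_def cseg_def by simp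
  have transfer: "card (I t \<inter> S) + card {y \<in> S - U. perm_inv y \<in> U}
      = card (I a \<inter> S) + card {y \<in> S \<inter> U. perm_inv y \<notin> U}"
    unfolding U_def by (rule transfer_count[OF t a_in]) (auto simp: S_def cseg_def)
  have exch: "card (H \<inter> S) \<le> card (I a \<inter> S) + e"
    unfolding H_def e_def by (rule card_exchange_le[OF fS m_mem(1) j_notin])
  have "card {y \<in> S - U. perm_inv y \<in> U} + e \<le> card {y \<in> S \<inter> U. perm_inv y \<notin> U}"
  proof (cases "crank n t a \<le> x")
    case True
    then show ?thesis using flow_bound_long[OF t] unfolding S_def U_def e_def by blast
  next
    case False
    then have "S - U = {}" unfolding S_def U_def cseg_def carc_def by auto
    then have "{y \<in> S - U. perm_inv y \<in> U} = {}" by blast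
    moreover have "e \<le> card {y \<in> S \<inter> U. perm_inv y \<notin> U}"
    proof (cases "e = 0")
      case e: False
      have "j \<in> S" "m \<notin> S" using e unfolding e_def by (auto split: if_splits)
      moreover have "x < crank n t a" using False by simp
      ultimately have "{y \<in> S \<inter> U. perm_inv y \<notin> U} \<noteq> {}"
        using flow_bound_short[OF t] unfolding S_def U_def by blast
      then have "card {y \<in> S \<inter> U. perm_inv y \<notin> U} \<noteq> 0" using fS by simp
      moreover have "e \<le> 1" unfolding e_def by simp
      ultimately show ?thesis by linarith
    qed simp
    ultimately show ?thesis by (metis card.empty add_0)
  qed
  then show "card (H \<inter> cseg n t x) \<le> card (I t \<inter> cseg n t x)"
    using transfer exch unfolding S_def by linarith
qed

end

theorem mainTheorem1:
  fixes n k :: nat and M :: "nat set set" and I :: "nat \<Rightarrow> nat set" and j a :: nat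
  assumes "positroid_necklace n k M I"
    and "j \<in> {1..n}"
    and "neck_perm n I j \<noteq> j"
    and "a \<in> {1..n}"
    and "j \<notin> I a"
  shows "I a - I j \<noteq> {} \<and>
         ((I a - {cmax n a (I a - I j)}) \<union> {j}) \<in> {H \<in> M. j \<in> H}"
proof -
  have neck: "grassmann_necklace n I" "\<forall>t\<in>{1..n}. card (I t) = k"
    and M: "M = {H \<in> ksubsets n k. \<forall>t\<in>{1..n}. gale_le n t (I t) H}"
    using assms(1) unfolding positroid_necklace_def by blast+
  interpret exchange n k I j a
    by unfold_locales (use neck assms(2-5) in auto)
  have "H \<in> M" using H_ksubset gale_H M by blast
  then show ?thesis using diff_nonempty unfolding H_def m_def by blast
qed

end
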